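(* Let $(z_n)_{n\in\mathbb{N}}\subset\mathbb{C}$ and $(\lambda_n)_{n\in\mathbb{N}}\subset\mathbb{R}^+$ be sequences and let $x,c_1,c_2$ be positive reals. Let $T,T'\in[1,\infty)$ with $|T-T'|\le1$. Assume that for $t\ge1$, $$\sum_{\lambda_n\le t}|z_n|^2\ll t^{c_1}\qquad\text{and}\qquad\sum_{t<\lambda_n\le t+1}1\ll(\log t)^{c_2}.$$ Then $$\sum_{\lambda_n\le T'}\frac{z_nx^{\frac12+i\lambda_n}}{\frac12+i\lambda_n}=\sum_{\lambda_n\le T}\frac{z_nx^{\frac12+i\lambda_n}}{\frac12+i\lambda_n}+O\Big(x^{1/2}T^{(c_1-2)/2}(\log T)^{c_2/2}\Big).$$
   Context: $f\ll g$ means $|f|\le M|g|$ for some constant $M>0$. *)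

theory Defs
  imports "HOL-Analysis.Analysis"
begin

end

theory Submission
  imports Defs
begin

text \<open>For \<open>T \<le> T'\<close> the difference is the sum over \<open>T < \<lambda>\<^sub>n \<le> T' \<le> T + 1\<close>. Each of these
  terms has \<open>|\<rho>\<^sub>n| \<ge> \<lambda>\<^sub>n > T\<close>, so its size is at most \<open>|z\<^sub>n| x\<^sup>1\<^sup>/\<^sup>2 / T\<close>, and Cauchy-Schwarz
  bounds \<open>\<Sum> |z\<^sub>n|\<close> over the window by the square root of \<open>\<Sum>\<^bsub>\<lambda>\<^sub>n \<le> 2T\<^esub> |z\<^sub>n|\<^sup>2 \<ll> T\<^sup>c\<^sup>1\<close> times
  the number of terms, which is \<open>\<ll> (log T)\<^sup>c\<^sup>2\<close>.\<close>

definition truncated_rho_sum :: "(nat \<Rightarrow> complex) \<Rightarrow> (nat \<Rightarrow> real) \<Rightarrow> real \<Rightarrow> real \<Rightarrow> complex" where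
  "truncated_rho_sum z lam x t =
     (\<Sum>n\<in>{n. lam n \<le> t}. z n * complex_of_real x powr (1/2 + \<i> * complex_of_real (lam n))
                            / (1/2 + \<i> * complex_of_real (lam n)))"

lemma norm_rho_term_le:
  fixes w :: complex and x a l :: real
  assumes "x > 0" and "0 < a" and "a \<le> l"
  shows "cmod (w * complex_of_real x powr (1/2 + \<i> * complex_of_real l) / (1/2 + \<i> * complex_of_real l))
           \<le> cmod w * (x powr (1/2) / a)"
proof -
  define \<rho> where "\<rho> = 1/2 + \<i> * complex_of_real l"
  have "a \<le> cmod \<rho>"
    using abs_Im_le_cmod[of \<rho>] assms(3) by (simp add: \<rho>_def)
  moreover have "cmod (complex_of_real x powr \<rho>) = x powr (1/2)"
    using assms(1) by (simp add: norm_powr_real_powr \<rho>_def)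
  ultimately show ?thesis
    using assms(2) by (simp add: \<rho>_def [symmetric] norm_mult norm_divide frac_le)
qed

lemma norm_sum_le_sqrt_sum_squares_card:
  fixes f :: "'a \<Rightarrow> 'b::real_normed_vector" and w :: "'a \<Rightarrow> 'c::real_normed_vector"
  assumes "finite S" and "K \<ge> 0"
    and "\<And>n. n \<in> S \<Longrightarrow> norm (f n) \<le> norm (w n) * K"
    and "(\<Sum>n\<in>S. (norm (w n))\<^sup>2) \<le> A" and "real (card S) \<le> B"
  shows "norm (sum f S) \<le> K * sqrt (A * B)"
proof -
  have "norm (sum f S) \<le> (\<Sum>n\<in>S. norm (w n) * K)"
    by (rule order_trans [OF norm_sum sum_mono]) (rule assms(3))
  also have "\<dots> = K * (\<Sum>n\<in>S. norm (w n))"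
    by (subst sum_distrib_left) (simp add: mult.commute)
  also have "(\<Sum>n\<in>S. norm (w n)) \<le> sqrt ((\<Sum>n\<in>S. (norm (w n))\<^sup>2) * card S)"
    using sum_squared_le_sum_of_squares real_le_rsqrt by blast
  also have "\<dots> \<le> sqrt (A * B)"
  proof -
    have "0 \<le> A"
      by (rule order_trans [OF sum_nonneg assms(4)]) simp
    then show ?thesis
      using assms(4,5) by (intro real_sqrt_le_mono mult_mono) auto
  qed
  finally show ?thesis
    using assms(2) by (simp add: mult_left_mono)
qed

lemma sum_level_set_diff:
  fixes f :: "'a \<Rightarrow> 'b::ab_group_add" and lam :: "'a \<Rightarrow> real"
  assumes "finite {n. lam n \<le> b}" and "a \<le> b"
  shows "(\<Sum>n\<in>{n. lam n \<le> b}. f n) - (\<Sum>n\<in>{n. lam n \<le> a}. f n)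
           = (\<Sum>n\<in>{n. a < lam n \<and> lam n \<le> b}. f n)"
proof -
  have split: "{n. lam n \<le> b} = {n. a < lam n \<and> lam n \<le> b} \<union> {n. lam n \<le> a}"
    using assms(2) by auto
  have "finite {n. lam n \<le> a}" and "finite {n. a < lam n \<and> lam n \<le> b}"
    by (rule rev_finite_subset [OF assms(1)], use assms(2) in auto)+
  then have "(\<Sum>n\<in>{n. lam n \<le> b}. f n)
               = (\<Sum>n\<in>{n. a < lam n \<and> lam n \<le> b}. f n) + (\<Sum>n\<in>{n. lam n \<le> a}. f n)"
    unfolding split by (intro sum.union_disjoint) auto
  then show ?thesis
    by simp
qed

lemma norm_truncated_rho_sum_diff_le:
  assumes "finite {n. lam n \<le> b}" and "x > 0" and "0 < a" and "a \<le> b"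
    and "(\<Sum>n\<in>{n. lam n \<le> b}. (cmod (z n))\<^sup>2) \<le> A"
    and "real (card {n. a < lam n \<and> lam n \<le> b}) \<le> B"
  shows "cmod (truncated_rho_sum z lam x b - truncated_rho_sum z lam x a) \<le> x powr (1/2) / a * sqrt (A * B)"
proof -
  let ?S = "{n. a < lam n \<and> lam n \<le> b}"
  have fin: "finite ?S"
    using assms(1) by (rule rev_finite_subset) auto
  have "(\<Sum>n\<in>?S. (cmod (z n))\<^sup>2) \<le> (\<Sum>n\<in>{n. lam n \<le> b}. (cmod (z n))\<^sup>2)"
    using assms(1) by (intro sum_mono2) auto
  then show ?thesis
    unfolding truncated_rho_sum_def sum_level_set_diff[OF assms(1,4)]
    using assms(2,3,5,6) fin
    by (intro norm_sum_le_sqrt_sum_squares_card [where w = z] norm_rho_term_le) auto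
qed

lemma short_interval_estimate_le:
  fixes a b T x M1 M2 c1 c2 :: real
  assumes "1 \<le> a" and "a \<le> T" and "T \<le> 2 * a" and "0 \<le> b" and "b \<le> 2 * T"
    and "0 \<le> M1" and "0 \<le> M2" and "0 \<le> c1" and "0 \<le> c2"
  shows "x powr (1/2) / a * sqrt (M1 * b powr c1 * (M2 * ln a powr c2))
           \<le> 2 * sqrt (M1 * M2 * 2 powr c1) * (x powr (1/2) * T powr ((c1 - 2) / 2) * ln T powr (c2 / 2))"
proof -
  have "M1 * b powr c1 * (M2 * ln a powr c2) \<le> M1 * M2 * 2 powr c1 * (T powr c1 * ln T powr c2)"
  proof -
    have "b powr c1 \<le> 2 powr c1 * T powr c1"
      using assms powr_mono2[of c1 b "2 * T"] by (simp add: powr_mult)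
    moreover have "ln a powr c2 \<le> ln T powr c2"
      using assms by (intro powr_mono2) auto
    ultimately have "b powr c1 * ln a powr c2 \<le> 2 powr c1 * T powr c1 * ln T powr c2"
      by (simp add: mult_mono)
    then show ?thesis
      using assms(6,7) by (simp add: mult_left_mono mult_ac)
  qed
  moreover have "sqrt (M1 * M2 * 2 powr c1 * (T powr c1 * ln T powr c2))
                   = sqrt (M1 * M2 * 2 powr c1) * (T powr (c1 / 2) * ln T powr (c2 / 2))"
    using assms(1,2) by (simp add: real_sqrt_mult powr_half_sqrt [symmetric] powr_powr)
  ultimately have sqrt_le: "sqrt (M1 * b powr c1 * (M2 * ln a powr c2))
               \<le> sqrt (M1 * M2 * 2 powr c1) * (T powr (c1 / 2) * ln T powr (c2 / 2))"
    by (metis real_sqrt_le_mono)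
  have inverse_le: "x powr (1/2) / a \<le> 2 * x powr (1/2) / T"
  proof -
    have "T * x powr (1/2) \<le> (2 * a) * x powr (1/2)"
      using assms(3) by (intro mult_right_mono) auto
    then show ?thesis
      using assms(1,2) by (simp add: field_simps)
  qed
  have "x powr (1/2) / a * sqrt (M1 * b powr c1 * (M2 * ln a powr c2))
          \<le> 2 * x powr (1/2) / T * (sqrt (M1 * M2 * 2 powr c1) * (T powr (c1 / 2) * ln T powr (c2 / 2)))"
    using inverse_le sqrt_le assms by (intro mult_mono) auto
  also have "T powr (c1 / 2) = T * T powr ((c1 - 2) / 2)"
    using assms(1,2) by (simp add: diff_divide_distrib powr_diff)
  finally show ?thesis
    using assms(1,2) by (simp add: mult_ac)
qed

lemma ex_nonneg_bound_const:
  fixes f g :: "real \<Rightarrow> real"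
  assumes "\<exists>M. \<forall>t\<ge>t\<^sub>0. \<bar>f t\<bar> \<le> M * \<bar>g t\<bar>"
  shows "\<exists>M\<ge>0. \<forall>t\<ge>t\<^sub>0. \<bar>f t\<bar> \<le> M * \<bar>g t\<bar>"
proof -
  obtain M where M: "\<forall>t\<ge>t\<^sub>0. \<bar>f t\<bar> \<le> M * \<bar>g t\<bar>"
    using assms by blast
  have "\<bar>f t\<bar> \<le> max M 0 * \<bar>g t\<bar>" if "t \<ge> t\<^sub>0" for t
    using M that by (meson abs_ge_zero max.cobounded1 mult_right_mono order_trans)
  then show ?thesis
    by (intro exI [of _ "max M 0"]) auto
qed

theorem lemma4p4:
  fixes z :: "nat \<Rightarrow> complex" and lam :: "nat \<Rightarrow> real" and c1 c2 :: real
  assumes lam_pos: "\<And>n. lam n > 0"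
    and c1_pos: "c1 > 0" and c2_pos: "c2 > 0"
    and fin: "\<And>t. finite {n. lam n \<le> t}"
    and H1: "\<exists>M. \<forall>t\<ge>1. \<bar>\<Sum>n\<in>{n. lam n \<le> t}. (cmod (z n))\<^sup>2\<bar> \<le> M * \<bar>t powr c1\<bar>"
    and H2: "\<exists>M. \<forall>t\<ge>1. \<bar>real (card {n. t < lam n \<and> lam n \<le> t + 1})\<bar> \<le> M * \<bar>(ln t) powr c2\<bar>"
  shows "\<exists>C. \<forall>x T T'. x > 0 \<longrightarrow> T \<ge> 1 \<longrightarrow> T' \<ge> 1 \<longrightarrow> \<bar>T - T'\<bar> \<le> 1 \<longrightarrow>
     cmod ((\<Sum>n\<in>{n. lam n \<le> T'}. z n * complex_of_real x powr (1/2 + \<i> * complex_of_real (lam n)) / (1/2 + \<i> * complex_of_real (lam n)))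
         - (\<Sum>n\<in>{n. lam n \<le> T}. z n * complex_of_real x powr (1/2 + \<i> * complex_of_real (lam n)) / (1/2 + \<i> * complex_of_real (lam n))))
     \<le> C * \<bar>x powr (1/2) * T powr ((c1 - 2) / 2) * (ln T) powr (c2 / 2)\<bar>"
proof -
  obtain M1 where "M1 \<ge> 0" and M1: "\<forall>t\<ge>1. \<bar>\<Sum>n\<in>{n. lam n \<le> t}. (cmod (z n))\<^sup>2\<bar> \<le> M1 * \<bar>t powr c1\<bar>"
    using ex_nonneg_bound_const [OF H1] by blast
  obtain M2 where "M2 \<ge> 0" and M2: "\<forall>t\<ge>1. \<bar>real (card {n. t < lam n \<and> lam n \<le> t + 1})\<bar> \<le> M2 * \<bar>ln t powr c2\<bar>"
    using ex_nonneg_bound_const [OF H2] by blast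
  show ?thesis
    unfolding truncated_rho_sum_def [symmetric]
  proof (intro exI allI impI)
    fix x T T' :: real
    assume "x > 0" and "T \<ge> 1" and "T' \<ge> 1" and "\<bar>T - T'\<bar> \<le> 1"
    define a b where "a = min T T'" and "b = max T T'"
    have ab: "1 \<le> a" "a \<le> T" "T \<le> 2 * a" "a \<le> b" "b \<le> a + 1" "b \<le> 2 * T"
      using \<open>T \<ge> 1\<close> \<open>T' \<ge> 1\<close> \<open>\<bar>T - T'\<bar> \<le> 1\<close> by (auto simp: a_def b_def)
    have "(\<Sum>n\<in>{n. lam n \<le> b}. (cmod (z n))\<^sup>2) \<le> M1 * b powr c1"
      using M1 ab by (force simp: abs_of_nonneg sum_nonneg)
    moreover have "real (card {n. a < lam n \<and> lam n \<le> b}) \<le> M2 * ln a powr c2"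
    proof -
      have "card {n. a < lam n \<and> lam n \<le> b} \<le> card {n. a < lam n \<and> lam n \<le> a + 1}"
        using ab by (intro card_mono rev_finite_subset [OF fin [of "a + 1"]]) auto
      moreover have "real (card {n. a < lam n \<and> lam n \<le> a + 1}) \<le> M2 * ln a powr c2"
        using M2 ab by force
      ultimately show ?thesis
        by linarith
    qed
    ultimately have "cmod (truncated_rho_sum z lam x b - truncated_rho_sum z lam x a)
                 \<le> x powr (1/2) / a * sqrt (M1 * b powr c1 * (M2 * ln a powr c2))"
      using ab \<open>x > 0\<close> by (intro norm_truncated_rho_sum_diff_le fin) auto
    also have "\<dots> \<le> 2 * sqrt (M1 * M2 * 2 powr c1) * \<bar>x powr (1/2) * T powr ((c1 - 2) / 2) * ln T powr (c2 / 2)\<bar>"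
      using short_interval_estimate_le [of a T b M1 M2 c1 c2 x] ab \<open>M1 \<ge> 0\<close> \<open>M2 \<ge> 0\<close> c1_pos c2_pos
      by simp
    finally show "cmod (truncated_rho_sum z lam x T' - truncated_rho_sum z lam x T)
                    \<le> 2 * sqrt (M1 * M2 * 2 powr c1) * \<bar>x powr (1/2) * T powr ((c1 - 2) / 2) * ln T powr (c2 / 2)\<bar>"
      by (cases "T \<le> T'") (simp_all add: a_def b_def norm_minus_commute)
  qed
qed

end
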